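(* Assume the block-sparse setting described in the context, with adversarial noise satisfying $\|w\|_2\le\varepsilon$ for a known constant $\varepsilon>0$, and assume $x\neq 0$. Suppose that $$(1-(d-1)\nu)\,x_{\min} > 2\varepsilon\sqrt{1+(d-1)\nu} + (2k-1)\,d\,\mu_B\,x_{\min}.$$ Then the BOMP algorithm selects all elements of $S=\mathrm{supp}(x)$ among its chosen indices $\{i_1,\dots,i_k\}$, and its output satisfies $$\|\hat x_{\mathrm{BOMP}}-x\|_2^2 \le \frac{\varepsilon^2}{1-(d-1)\nu-(k-1)d\mu_B}.$$
   Context: Setting: $N=Md$. For $v\in\mathbb{C}^N$, $v[i]=(v_{(i-1)d+1},\dots,v_{id})^T$ is its $i$-th block ($1\le i\le M$); for a matrix $A$ with $N$ columns, $A[i]$ is the submatrix of columns $(i-1)d+1,\dots,id$. The (block) support is $\mathrm{supp}(v)=\{i: v[i]\neq 0\}$. For an index set $I=\{i_1<\dots<i_p\}$, $v_I$ is the concatenation of the blocks $v[i_1],\dots,v[i_p]$ and $A_I=[A[i_1],\dots,A[i_p]]$. The unknown deterministic vector $x\in\mathbb{C}^N$ has at most $k$ nonzero blocks (with $k$ known); $S=\mathrm{supp}(x)$, $s=|S|$, $x_{\max}=\max_{i\in S}\|x[i]\|_2$, $x_{\min}=\min_{i\in S}\|x[i]\|_2$. Observations are $y=Dx+w$ where $D\in\mathbb{C}^{L\times N}$ is known with columns $d_1,\dots,d_N$ of unit $\ell_2$ norm, $L<N$, and $D_I$ has full column rank for every index set $I$ with $|I|\le k$. Block coherence: $\mu_B=\max_{i\neq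 j}\frac1d\|D[i]^*D[j]\|$ (spectral norm). Sub-coherence: $\nu=\max_{1\le \ell\le M}\max_{(\ell-1)d+1\le i\neq j\le \ell d}|d_i^*d_j|$. BOMP algorithm: set $r^0=y$. For $\ell=1,\dots,k$: choose $i_\ell\in\arg\max_{i}\|D[i]^*r^{\ell-1}\|_2$ (ties broken arbitrarily); let $x^\ell$ be a minimizer of $\|y-D\tilde x\|_2$ over $\tilde x$ with $\mathrm{supp}(\tilde x)\subseteq\{i_1,\dots,i_\ell\}$; set $r^\ell=y-Dx^\ell$. Output $\hat x_{\mathrm{BOMP}}=x^k$. *)

theory Defs
  imports Complex_Main
begin

text \<open>Vectors in C^n are functions nat => complex, only the entries
  with index < n are meaningful (0-based indexing). A matrix with L rows and
  N columns is a function nat => nat => complex (row, column), entries with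
  row < L and column < N meaningful. Block number i (0-based, 0 <= i < M)
  of a vector of length N = M*d consists of the indices i*d, ..., (i+1)*d - 1;
  it corresponds to block i+1 of the paper.\<close>

definition blk :: "nat \<Rightarrow> nat \<Rightarrow> nat set" where
  "blk d i = {i * d ..< (i + 1) * d}"

definition vnorm :: "nat set \<Rightarrow> (nat \<Rightarrow> complex) \<Rightarrow> real" where
  "vnorm A v = sqrt (\<Sum>j\<in>A. (cmod (v j))\<^sup>2)"

definition bsupp :: "nat \<Rightarrow> nat \<Rightarrow> (nat \<Rightarrow> complex) \<Rightarrow> nat set" where
  "bsupp M d v = {i. i < M \<and> (\<exists>j\<in>blk d i. v j \<noteq> 0)}"

definition mulv :: "nat \<Rightarrow> (nat \<Rightarrow> nat \<Rightarrow> complex) \<Rightarrow> (nat \<Rightarrow> complex) \<Rightarrow> (nat \<Rightarrow> complex)" where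
  "mulv N D v = (\<lambda>q. \<Sum>c<N. D q c * v c)"

definition bcorr :: "nat \<Rightarrow> nat \<Rightarrow> (nat \<Rightarrow> nat \<Rightarrow> complex) \<Rightarrow> (nat \<Rightarrow> complex) \<Rightarrow> nat \<Rightarrow> (nat \<Rightarrow> complex)" where
  "bcorr L d D r i = (\<lambda>a. \<Sum>q<L. cnj (D q (i * d + a)) * r q)"

definition bgram :: "nat \<Rightarrow> nat \<Rightarrow> (nat \<Rightarrow> nat \<Rightarrow> complex) \<Rightarrow> nat \<Rightarrow> nat \<Rightarrow> (nat \<Rightarrow> nat \<Rightarrow> complex)" where
  "bgram L d D i j = (\<lambda>a b. \<Sum>q<L. cnj (D q (i * d + a)) * D q (j * d + b))"

definition spec_norm :: "nat \<Rightarrow> (nat \<Rightarrow> nat \<Rightarrow> complex) \<Rightarrow> real" where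
  "spec_norm n A = Sup {vnorm {..<n} (\<lambda>a. \<Sum>b<n. A a b * u b) | u. vnorm {..<n} u = 1}"

text \<open>Block coherence mu_B (maximum over i ~= j; the extra 0 only makes the
  maximum well defined when M = 1, where it is the natural value).\<close>
definition block_coherence :: "nat \<Rightarrow> nat \<Rightarrow> nat \<Rightarrow> (nat \<Rightarrow> nat \<Rightarrow> complex) \<Rightarrow> real" where
  "block_coherence L M d D =
     Max ({0} \<union> {spec_norm d (bgram L d D i j) / real d | i j. i < M \<and> j < M \<and> i \<noteq> j})"

text \<open>Sub-coherence nu (maximum over distinct columns within a block; the extra 0
  only matters when d = 1).\<close>
definition sub_coherence :: "nat \<Rightarrow> nat \<Rightarrow> nat \<Rightarrow> (nat \<Rightarrow> nat \<Rightarrow> complex) \<Rightarrow> real" where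
  "sub_coherence L M d D =
     Max ({0} \<union> {cmod (\<Sum>q<L. cnj (D q a) * D q b) | a b l.
                   l < M \<and> a \<in> blk d l \<and> b \<in> blk d l \<and> a \<noteq> b})"

text \<open>A valid run of BOMP (with any tie breaking and any choice of least-squares
  minimizer): idx l is the block chosen at step l (1 <= l <= k), xs l is the
  estimate x^l, and xs 0 = 0, so that the residual r^l = y - D x^l and r^0 = y.
  The output is xs k.\<close>
definition bomp_run :: "nat \<Rightarrow> nat \<Rightarrow> nat \<Rightarrow> (nat \<Rightarrow> nat \<Rightarrow> complex) \<Rightarrow> nat \<Rightarrow>
    (nat \<Rightarrow> complex) \<Rightarrow> (nat \<Rightarrow> nat) \<Rightarrow> (nat \<Rightarrow> nat \<Rightarrow> complex) \<Rightarrow> bool" where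
  "bomp_run L M d D k y idx xs \<longleftrightarrow>
     xs 0 = (\<lambda>_. 0) \<and>
     (\<forall>l \<in> {1..k}.
        let r = (\<lambda>q. y q - mulv (M * d) D (xs (l - 1)) q);
            T = idx ` {1..l};
            admissible = (\<lambda>z::nat \<Rightarrow> complex. \<forall>c. (c \<ge> M * d \<or> c div d \<notin> T) \<longrightarrow> z c = 0)
        in idx l < M \<and>
           (\<forall>i<M. vnorm {..<d} (bcorr L d D r i) \<le> vnorm {..<d} (bcorr L d D r (idx l))) \<and>
           admissible (xs l) \<and>
           (\<forall>z. admissible z \<longrightarrow>
              vnorm {..<L} (\<lambda>q. y q - mulv (M * d) D (xs l) q)
                \<le> vnorm {..<L} (\<lambda>q. y q - mulv (M * d) D z q)))"

end

theory Submission
  imports Defs "HOL-Analysis.L2_Norm" "HOL-Analysis.Convex"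
begin

text \<open>
  Write r = D v + w for a residual, where v is block-sparse on the support S.
  The sub-coherence nu makes each block D[i] a near-isometry (factor 1 +- (d-1) nu), and
  the block coherence mu_B bounds the interaction of distinct blocks by d mu_B.  Hence the
  strongest block of v correlates with r at least
  (1 - (d-1) nu - (|S|-1) d mu_B) ||v[i]|| - sqrt(1 + (d-1) nu) ||w||, whereas a block
  outside S correlates at most |S| d mu_B ||v[i]|| + sqrt(1 + (d-1) nu) ||w||.  The
  hypothesis of the theorem separates these two bounds, so every greedy step picks a
  block of S; since the least-squares residual is orthogonal to the blocks already
  chosen, that block is new.  After k steps S is found, and the final error follows
  from the optimality of the least-squares fit and the lower restricted-isometry bound
  ||D e||^2 >= (1 - (d-1) nu - (k-1) d mu_B) ||e||^2.
\<close>

definition cinner :: "nat \<Rightarrow> (nat \<Rightarrow> complex) \<Rightarrow> (nat \<Rightarrow> complex) \<Rightarrow> complex" where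
  "cinner n a b = (\<Sum>q<n. cnj (a q) * b q)"

definition sqnorm :: "nat set \<Rightarrow> (nat \<Rightarrow> complex) \<Rightarrow> real" where
  "sqnorm A v = (\<Sum>j\<in>A. (cmod (v j))\<^sup>2)"

lemma sqnorm_nonneg: "sqnorm A v \<ge> 0"
  unfolding sqnorm_def by (simp add: sum_nonneg)

lemma vnorm_sqnorm: "vnorm A v = sqrt (sqnorm A v)"
  unfolding vnorm_def sqnorm_def ..

lemma vnorm_sq: "(vnorm A v)\<^sup>2 = sqnorm A v"
  using sqnorm_nonneg by (simp add: vnorm_sqnorm)

lemma vnorm_nonneg: "vnorm A v \<ge> 0"
  by (simp add: vnorm_sqnorm sqnorm_nonneg)

lemma vnorm_mono:
  assumes "\<And>j. j \<in> A \<Longrightarrow> cmod (u j) \<le> cmod (v j)"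
  shows "vnorm A u \<le> vnorm A v"
proof -
  have "sqnorm A u \<le> sqnorm A v"
    unfolding sqnorm_def by (rule sum_mono) (use assms in \<open>auto intro: power_mono\<close>)
  then show ?thesis unfolding vnorm_sqnorm by simp
qed

lemma sqnorm_zero:
  assumes "finite A" "sqnorm A u = 0" "j \<in> A"
  shows "u j = 0"
proof -
  have "(cmod (u j))\<^sup>2 = 0"
    using assms sum_nonneg_eq_0_iff[of A "\<lambda>j. (cmod (u j))\<^sup>2"] unfolding sqnorm_def by auto
  then show ?thesis by simp
qed

lemma sqnorm_scale: "sqnorm A (\<lambda>j. c * u j) = (cmod c)\<^sup>2 * sqnorm A u"
  unfolding sqnorm_def by (simp add: norm_mult power_mult_distrib sum_distrib_left)

lemma vnorm_scale: "vnorm A (\<lambda>j. c * u j) = cmod c * vnorm A u"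
  unfolding vnorm_sqnorm sqnorm_scale by (simp add: real_sqrt_mult)

lemma sqnorm_cong: "(\<And>q. q \<in> A \<Longrightarrow> b q = b' q) \<Longrightarrow> sqnorm A b = sqnorm A b'"
  unfolding sqnorm_def by simp

lemma sqnorm_diff:
  "sqnorm A (\<lambda>q. a q - b q) = sqnorm A a - 2 * (\<Sum>q\<in>A. Re (cnj (b q) * a q)) + sqnorm A b"
proof -
  have "sqnorm A (\<lambda>q. a q - b q)
      = (\<Sum>q\<in>A. (cmod (a q))\<^sup>2 - 2 * Re (cnj (b q) * a q) + (cmod (b q))\<^sup>2)"
    unfolding sqnorm_def
    by (rule sum.cong[OF refl]) (simp only: cmod_power2, simp add: power2_eq_square algebra_simps)
  then show ?thesis unfolding sqnorm_def by (simp add: sum.distrib sum_subtractf sum_distrib_left)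
qed

lemma cinner_self: "cinner n a a = complex_of_real (sqnorm {..<n} a)"
  unfolding cinner_def sqnorm_def of_real_sum
  by (rule sum.cong) (auto simp: mult.commute complex_norm_square[symmetric] of_real_power)

lemma Re_cinner: "Re (cinner n b a) = (\<Sum>q<n. Re (cnj (b q) * a q))"
  unfolding cinner_def by (simp add: Re_sum)

lemma cinner_Cauchy_Schwarz: "cmod (cinner n a b) \<le> vnorm {..<n} a * vnorm {..<n} b"
proof -
  have "cmod (cinner n a b) \<le> (\<Sum>q<n. cmod (cnj (a q) * b q))"
    unfolding cinner_def by (rule norm_sum)
  also have "\<dots> = (\<Sum>q<n. \<bar>cmod (a q)\<bar> * \<bar>cmod (b q)\<bar>)"
    by (simp add: norm_mult)
  also have "\<dots> \<le> L2_set (\<lambda>q. cmod (a q)) {..<n} * L2_set (\<lambda>q. cmod (b q)) {..<n}"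
    by (rule L2_set_mult_ineq)
  finally show ?thesis unfolding vnorm_def L2_set_def .
qed

lemma cinner_sum_right: "cinner n a (\<lambda>q. \<Sum>i\<in>I. f i q) = (\<Sum>i\<in>I. cinner n a (f i))"
  unfolding cinner_def by (simp add: sum_distrib_left sum.swap[of _ I])

lemma cinner_sum_left: "cinner n (\<lambda>q. \<Sum>i\<in>I. f i q) b = (\<Sum>i\<in>I. cinner n (f i) b)"
  unfolding cinner_def by (simp add: sum_distrib_right sum.swap[of _ I])

lemma cinner_add_right: "cinner n a (\<lambda>q. f q + g q) = cinner n a f + cinner n a g"
  unfolding cinner_def by (simp add: distrib_left sum.distrib)

lemma cinner_cong: "(\<And>q. q < n \<Longrightarrow> b q = b' q) \<Longrightarrow> cinner n a b = cinner n a b'"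
  unfolding cinner_def by simp

lemma sum_cmod_sq_le: "(\<Sum>b<d. cmod (a b))\<^sup>2 \<le> real d * sqnorm {..<d} a"
  using Cauchy_Schwarz_ineq_sum[of "\<lambda>_. 1::real" "\<lambda>b. cmod (a b)" "{..<d}"]
  unfolding sqnorm_def by simp

lemma sum_shift_block:
  fixes f :: "nat \<Rightarrow> 'a::comm_monoid_add"
  shows "(\<Sum>c\<in>{i*d..<i*d+d}. f c) = (\<Sum>b<d. f (i*d+b))"
proof -
  have "(\<Sum>c\<in>{0+i*d..<d+i*d}. f c) = (\<Sum>b\<in>{0..<d}. f (b+i*d))"
    by (rule sum.shift_bounds_nat_ivl)
  then show ?thesis by (simp add: lessThan_atLeast0 add.commute)
qed

lemma sum_blocks:
  fixes f :: "nat \<Rightarrow> 'a::comm_monoid_add"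
  shows "(\<Sum>c<M*d. f c) = (\<Sum>i<M. \<Sum>b<d. f (i*d+b))"
  using sum.nat_group[of f d M] by (simp add: sum_shift_block)

lemma sum_blk: "(\<Sum>c\<in>blk d i. f c) = (\<Sum>b<d. f (i*d+b))"
  unfolding blk_def using sum_shift_block[of f i d] by (simp add: add.commute)

lemma block_index_bound: "(i::nat) < M \<Longrightarrow> b < d \<Longrightarrow> i * d + b < M * d"
proof -
  assume "i < M" "b < d"
  then have "i * d + b < (i + 1) * d" by simp
  also have "\<dots> \<le> M * d" using \<open>i < M\<close> by (intro mult_right_mono) auto
  finally show ?thesis .
qed

definition blockvec :: "nat \<Rightarrow> (nat \<Rightarrow> complex) \<Rightarrow> nat \<Rightarrow> (nat \<Rightarrow> complex)" where
  "blockvec d v i = (\<lambda>b. v (i*d+b))"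

definition blockop :: "nat \<Rightarrow> (nat \<Rightarrow> nat \<Rightarrow> complex) \<Rightarrow> nat \<Rightarrow> (nat \<Rightarrow> complex) \<Rightarrow> (nat \<Rightarrow> complex)" where
  "blockop d D i a = (\<lambda>q. \<Sum>b<d. D q (i*d+b) * a b)"

lemma vnorm_blk: "vnorm (blk d i) v = vnorm {..<d} (blockvec d v i)"
  unfolding vnorm_def blockvec_def sum_blk ..

lemma mulv_blocks: "mulv (M*d) D v q = (\<Sum>i<M. blockop d D i (blockvec d v i) q)"
  unfolding mulv_def blockop_def blockvec_def by (rule sum_blocks)

lemma cinner_bcorr: "cinner d a (bcorr L d D r i) = cinner L (blockop d D i a) r"
proof -
  have "cinner d a (bcorr L d D r i)
      = (\<Sum>b<d. \<Sum>q<L. cnj (a b) * (cnj (D q (i * d + b)) * r q))"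
    unfolding cinner_def bcorr_def by (simp add: sum_distrib_left)
  also have "\<dots> = (\<Sum>q<L. \<Sum>b<d. cnj (a b) * (cnj (D q (i * d + b)) * r q))"
    by (rule sum.swap)
  also have "\<dots> = cinner L (blockop d D i a) r"
    unfolding cinner_def blockop_def by (simp add: sum_distrib_right sum_distrib_left ac_simps)
  finally show ?thesis .
qed

lemma bcorr_blockop: "bcorr L d D (blockop d D j b) i a = (\<Sum>b'<d. bgram L d D i j a b' * b b')"
proof -
  have "bcorr L d D (blockop d D j b) i a
      = (\<Sum>q<L. \<Sum>b'<d. cnj (D q (i * d + a)) * D q (j*d+b') * b b')"
    unfolding bcorr_def blockop_def by (simp add: sum_distrib_left ac_simps)
  also have "\<dots> = (\<Sum>b'<d. \<Sum>q<L. cnj (D q (i * d + a)) * D q (j*d+b') * b b')"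
    by (rule sum.swap)
  finally show ?thesis unfolding bgram_def by (simp add: sum_distrib_right)
qed

lemma cinner_blockop:
  "cinner L (blockop d D i a) (blockop d D j b) = cinner d a (\<lambda>a'. \<Sum>b'<d. bgram L d D i j a' b' * b b')"
  unfolding cinner_bcorr[symmetric] bcorr_blockop ..

text \<open>The set whose supremum defines the spectral norm is bounded, by the row sums.\<close>
lemma spec_norm_set_bdd:
  "bdd_above {vnorm {..<n} (\<lambda>a. \<Sum>b<n. A a b * u b) | u. vnorm {..<n} u = 1}"
proof (rule bdd_aboveI)
  fix s assume "s \<in> {vnorm {..<n} (\<lambda>a. \<Sum>b<n. A a b * u b) | u. vnorm {..<n} u = 1}"
  then obtain u where u1: "vnorm {..<n} u = 1" and s: "s = vnorm {..<n} (\<lambda>a. \<Sum>b<n. A a b * u b)"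
    by auto
  have ub: "cmod (u b) \<le> 1" if "b < n" for b
  proof -
    have "(cmod (u b))\<^sup>2 \<le> sqnorm {..<n} u"
      unfolding sqnorm_def using that by (intro member_le_sum) auto
    also have "\<dots> = 1" using u1 vnorm_sq[of "{..<n}" u] by simp
    finally show ?thesis by (simp add: power_le_one_iff abs_le_square_iff)
  qed
  show "s \<le> vnorm {..<n} (\<lambda>a. of_real (\<Sum>b<n. cmod (A a b)))" unfolding s
  proof (rule vnorm_mono)
    fix a
    have "cmod (\<Sum>b<n. A a b * u b) \<le> (\<Sum>b<n. cmod (A a b * u b))" by (rule norm_sum)
    also have "\<dots> \<le> (\<Sum>b<n. cmod (A a b))"
      by (rule sum_mono) (use ub in \<open>auto simp: norm_mult intro: mult_left_le\<close>)
    also have "\<dots> = cmod (of_real (\<Sum>b<n. cmod (A a b)) :: complex)"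
      by (subst norm_of_real) (simp add: sum_nonneg)
    finally show "cmod (\<Sum>b<n. A a b * u b) \<le> cmod (of_real (\<Sum>b<n. cmod (A a b)) :: complex)" .
  qed
qed

lemma spec_norm_bound:
  assumes n1: "n \<ge> 1"
  shows "vnorm {..<n} (\<lambda>a. \<Sum>b<n. A a b * u b) \<le> spec_norm n A * vnorm {..<n} u"
proof -
  have upper: "vnorm {..<n} (\<lambda>a. \<Sum>b<n. A a b * u' b) \<le> spec_norm n A"
    if "vnorm {..<n} u' = 1" for u'
    unfolding spec_norm_def using that by (intro cSup_upper spec_norm_set_bdd) blast
  show ?thesis
  proof (cases "vnorm {..<n} u = 0")
    case True
    then have "\<And>b. b < n \<Longrightarrow> u b = 0"
      using sqnorm_zero[of "{..<n}" u] by (auto simp: vnorm_sqnorm)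
    then show ?thesis using True by (simp add: vnorm_def)
  next
    case False
    define c where "c = vnorm {..<n} u"
    have cpos: "c > 0" using False vnorm_nonneg[of "{..<n}" u] unfolding c_def by linarith
    have unit: "vnorm {..<n} (\<lambda>b. complex_of_real (1/c) * u b) = 1"
      unfolding vnorm_scale norm_of_real using cpos c_def by simp
    have "(\<lambda>a. \<Sum>b<n. A a b * (complex_of_real (1/c) * u b))
        = (\<lambda>a. complex_of_real (1/c) * (\<Sum>b<n. A a b * u b))"
      by (simp add: sum_distrib_left ac_simps)
    then have "(1/c) * vnorm {..<n} (\<lambda>a. \<Sum>b<n. A a b * u b)
        = vnorm {..<n} (\<lambda>a. \<Sum>b<n. A a b * (complex_of_real (1/c) * u b))"
      using cpos by (simp only: vnorm_scale norm_of_real) simp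
    also have "\<dots> \<le> spec_norm n A"
      using unit by (rule upper)
    finally show ?thesis using cpos unfolding c_def[symmetric] by (simp add: field_simps)
  qed
qed

lemma block_coherence_finite:
  "finite ({0} \<union> {spec_norm d (bgram L d D i j) / real d | i j. i < M \<and> j < M \<and> i \<noteq> j})"
proof -
  have "{spec_norm d (bgram L d D i j) / real d | i j. i < M \<and> j < M \<and> i \<noteq> j}
     \<subseteq> (\<lambda>(i,j). spec_norm d (bgram L d D i j) / real d) ` ({..<M} \<times> {..<M})" by auto
  then show ?thesis using finite_subset by blast
qed

lemma block_coherence_nonneg: "block_coherence L M d D \<ge> 0"
  unfolding block_coherence_def by (rule Max_ge[OF block_coherence_finite]) simp

lemma block_coherence_bound:
  assumes "i < M" "j < M" "i \<noteq> j" "d \<ge> 1"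
  shows "spec_norm d (bgram L d D i j) \<le> real d * block_coherence L M d D"
proof -
  have "spec_norm d (bgram L d D i j) / real d \<le> block_coherence L M d D"
    unfolding block_coherence_def by (rule Max_ge[OF block_coherence_finite]) (use assms in blast)
  then show ?thesis using assms by (simp add: field_simps)
qed

lemma sub_coherence_finite:
  "finite ({0} \<union> {cmod (\<Sum>q<L. cnj (D q a) * D q b) | a b l.
                   l < M \<and> a \<in> blk d l \<and> b \<in> blk d l \<and> a \<noteq> b})"
proof -
  have "a < M * d" if "l < M" "a \<in> blk d l" for a l
    using that block_index_bound[of l M "a - l * d" d] unfolding blk_def by auto
  then have "{cmod (\<Sum>q<L. cnj (D q a) * D q b) | a b l.
                   l < M \<and> a \<in> blk d l \<and> b \<in> blk d l \<and> a \<noteq> b}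
     \<subseteq> (\<lambda>(a,b). cmod (\<Sum>q<L. cnj (D q a) * D q b)) ` ({..<M*d} \<times> {..<M*d})"
    by fastforce
  then show ?thesis using finite_subset by blast
qed

lemma sub_coherence_nonneg: "sub_coherence L M d D \<ge> 0"
  unfolding sub_coherence_def by (rule Max_ge[OF sub_coherence_finite]) simp

lemma sub_coherence_bound:
  assumes "l < M" "a < d" "b < d" "a \<noteq> b"
  shows "cmod (bgram L d D l l a b) \<le> sub_coherence L M d D"
proof -
  have "l*d + a \<in> blk d l" "l*d + b \<in> blk d l" using assms unfolding blk_def by auto
  then have "cmod (\<Sum>q<L. cnj (D q (l*d+a)) * D q (l*d+b)) \<in> {cmod (\<Sum>q<L. cnj (D q a) * D q b) | a b l.
                   l < M \<and> a \<in> blk d l \<and> b \<in> blk d l \<and> a \<noteq> b}"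
    using assms by (intro CollectI exI[of _ "l*d+a"] exI[of _ "l*d+b"] exI[of _ l]) auto
  then show ?thesis unfolding sub_coherence_def bgram_def
    by (intro Max_ge[OF sub_coherence_finite]) blast
qed

text \<open>Summing diagonal-dominance estimates over the rows of a Gram matrix: with
  T = sum of the s_i, Cauchy-Schwarz gives T^2 <= |I| sum s_i^2.\<close>
lemma row_dominant_sum_lower:
  fixes s :: "'a \<Rightarrow> real"
  assumes fin: "finite I" and beta: "0 \<le> \<beta>"
  shows "(\<alpha> - (real (card I) - 1) * \<beta>) * (\<Sum>i\<in>I. (s i)\<^sup>2)
     \<le> (\<Sum>i\<in>I. \<alpha> * (s i)\<^sup>2 - \<beta> * s i * ((\<Sum>j\<in>I. s j) - s i))"
proof -
  define T where "T = (\<Sum>j\<in>I. s j)"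
  define Q where "Q = (\<Sum>i\<in>I. (s i)\<^sup>2)"
  have "T * T \<le> real (card I) * Q"
    using Cauchy_Schwarz_ineq_sum[of "\<lambda>_. 1::real" s I] unfolding T_def Q_def
    by (simp add: power2_eq_square)
  then have "\<beta> * (T * T) \<le> \<beta> * (real (card I) * Q)"
    using beta by (rule mult_left_mono)
  moreover have "(\<Sum>i\<in>I. \<alpha> * (s i)\<^sup>2 - \<beta> * s i * (T - s i))
      = (\<Sum>i\<in>I. (\<alpha> + \<beta>) * (s i)\<^sup>2 - (\<beta> * T) * s i)"
    by (rule sum.cong[OF refl]) (simp add: algebra_simps power2_eq_square)
  then have "(\<Sum>i\<in>I. \<alpha> * (s i)\<^sup>2 - \<beta> * s i * (T - s i)) = (\<alpha> + \<beta>) * Q - \<beta> * (T * T)"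
    unfolding sum_subtractf sum_distrib_left[symmetric] Q_def T_def by simp
  ultimately show ?thesis unfolding T_def[symmetric] Q_def[symmetric] by (simp add: algebra_simps)
qed

lemma cinner_blockop_cross:
  assumes "i < M" "j < M" "i \<noteq> j" "d \<ge> 1"
  shows "cmod (cinner L (blockop d D i a) (blockop d D j b))
     \<le> real d * block_coherence L M d D * vnorm {..<d} a * vnorm {..<d} b"
proof -
  have "cmod (cinner L (blockop d D i a) (blockop d D j b))
      \<le> vnorm {..<d} a * vnorm {..<d} (\<lambda>a'. \<Sum>b'<d. bgram L d D i j a' b' * b b')"
    unfolding cinner_blockop by (rule cinner_Cauchy_Schwarz)
  also have "\<dots> \<le> vnorm {..<d} a * (spec_norm d (bgram L d D i j) * vnorm {..<d} b)"
    by (intro mult_left_mono spec_norm_bound) (use assms vnorm_nonneg in auto)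
  also have "\<dots> \<le> vnorm {..<d} a * (real d * block_coherence L M d D * vnorm {..<d} b)"
    by (intro mult_left_mono mult_right_mono block_coherence_bound) (use assms vnorm_nonneg in auto)
  finally show ?thesis by (simp add: ac_simps)
qed

lemma offdiag_quadratic_bound:
  fixes g :: "nat \<Rightarrow> nat \<Rightarrow> complex"
  assumes g: "\<And>a b. a < n \<Longrightarrow> b < n \<Longrightarrow> a \<noteq> b \<Longrightarrow> cmod (g a b) \<le> \<nu>" and nu0: "\<nu> \<ge> 0"
  shows "cmod (\<Sum>a<n. cnj (u a) * (\<Sum>b\<in>{..<n}-{a}. g a b * u b)) \<le> (real n - 1) * \<nu> * sqnorm {..<n} u"
proof -
  define S where "S = (\<Sum>a<n. cmod (u a))"
  have row: "(\<Sum>b\<in>{..<n}-{a}. cmod (u b)) = S - cmod (u a)" if "a < n" for a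
    unfolding S_def using that by (subst sum.remove[of "{..<n}" a]) auto
  have "cmod (\<Sum>a<n. cnj (u a) * (\<Sum>b\<in>{..<n}-{a}. g a b * u b))
      \<le> (\<Sum>a<n. cmod (u a) * (\<Sum>b\<in>{..<n}-{a}. \<nu> * cmod (u b)))"
  proof (rule order_trans[OF norm_sum sum_mono])
    fix a assume a: "a \<in> {..<n}"
    have "cmod (\<Sum>b\<in>{..<n}-{a}. g a b * u b) \<le> (\<Sum>b\<in>{..<n}-{a}. cmod (g a b * u b))"
      by (rule norm_sum)
    also have "\<dots> \<le> (\<Sum>b\<in>{..<n}-{a}. \<nu> * cmod (u b))"
      using a g by (intro sum_mono) (auto simp: norm_mult intro: mult_right_mono)
    finally show "cmod (cnj (u a) * (\<Sum>b\<in>{..<n}-{a}. g a b * u b))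
        \<le> cmod (u a) * (\<Sum>b\<in>{..<n}-{a}. \<nu> * cmod (u b))"
      by (simp add: norm_mult mult_left_mono)
  qed
  also have "\<dots> = \<nu> * (\<Sum>a<n. cmod (u a) * S - (cmod (u a))\<^sup>2)"
    by (simp add: sum_distrib_left[symmetric] row sum_distrib_left power2_eq_square algebra_simps)
  also have "\<dots> = \<nu> * (S\<^sup>2 - sqnorm {..<n} u)"
    unfolding sum_subtractf sum_distrib_right[symmetric] sqnorm_def S_def power2_eq_square ..
  also have "\<dots> \<le> \<nu> * (real n * sqnorm {..<n} u - sqnorm {..<n} u)"
    using sum_cmod_sq_le[of u n] nu0 unfolding S_def by (intro mult_left_mono) auto
  finally show ?thesis by (simp add: algebra_simps)
qed

definition supported_on :: "nat \<Rightarrow> nat \<Rightarrow> nat set \<Rightarrow> (nat \<Rightarrow> complex) \<Rightarrow> bool" where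
  "supported_on M d I v \<longleftrightarrow> (\<forall>c. (c \<ge> M * d \<or> c div d \<notin> I) \<longrightarrow> v c = 0)"

lemma supported_on_mono: "supported_on M d A v \<Longrightarrow> A \<subseteq> B \<Longrightarrow> supported_on M d B v"
  unfolding supported_on_def by auto

lemma blockvec_outside:
  assumes "supported_on M d I v" "i \<notin> I" "b < d"
  shows "blockvec d v i b = 0"
proof -
  have "(i*d+b) div d = i" using assms by simp
  then show ?thesis using assms unfolding supported_on_def blockvec_def by auto
qed

lemma mulv_supported:
  assumes sup: "supported_on M d I v" and IM: "I \<subseteq> {..<M}"
  shows "mulv (M*d) D v q = (\<Sum>i\<in>I. blockop d D i (blockvec d v i) q)"
  unfolding mulv_blocks
  by (rule sum.mono_neutral_right) (use IM blockvec_outside[OF sup] in \<open>auto simp: blockop_def\<close>)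

lemma sqnorm_supported:
  assumes sup: "supported_on M d I v" and IM: "I \<subseteq> {..<M}"
  shows "sqnorm {..<M*d} v = (\<Sum>i\<in>I. sqnorm {..<d} (blockvec d v i))"
proof -
  have "sqnorm {..<M*d} v = (\<Sum>i<M. sqnorm {..<d} (blockvec d v i))"
    unfolding sqnorm_def blockvec_def by (rule sum_blocks)
  also have "\<dots> = (\<Sum>i\<in>I. sqnorm {..<d} (blockvec d v i))"
    by (rule sum.mono_neutral_right)
      (use IM blockvec_outside[OF sup] in \<open>auto simp: sqnorm_def\<close>)
  finally show ?thesis .
qed

lemma mulv_add: "mulv N D (\<lambda>c. f c + g c) q = mulv N D f q + mulv N D g q"
  unfolding mulv_def by (simp add: distrib_left sum.distrib)

lemma mulv_scale: "mulv N D (\<lambda>c. t * f c) q = t * mulv N D f q"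
  unfolding mulv_def by (simp add: sum_distrib_left ac_simps)

lemma mulv_diff: "mulv N D (\<lambda>c. f c - g c) q = mulv N D f q - mulv N D g q"
  unfolding mulv_def by (simp add: right_diff_distrib sum_subtractf)

lemma mulv_delta: "c < N \<Longrightarrow> mulv N D (\<lambda>c'. if c' = c then t else 0) q = D q c * t"
  unfolding mulv_def by (simp add: if_distrib sum.delta' cong: if_cong)

lemma lsq_residual_orthogonal:
  assumes sT: "supported_on M d T xl"
    and opt: "\<forall>z. supported_on M d T z \<longrightarrow>
      vnorm {..<L} (\<lambda>q. y q - mulv (M*d) D xl q) \<le> vnorm {..<L} (\<lambda>q. y q - mulv (M*d) D z q)"
    and unit_cols: "\<forall>c<M*d. vnorm {..<L} (\<lambda>q. D q c) = 1"
    and iT: "i \<in> T" and TM: "T \<subseteq> {..<M}" and b: "b < d"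
  shows "bcorr L d D (\<lambda>q. y q - mulv (M*d) D xl q) i b = 0"
proof -
  define r where "r = (\<lambda>q. y q - mulv (M*d) D xl q)"
  define c where "c = i*d + b"
  define col where "col = (\<lambda>q. D q c)"
  define t where "t = bcorr L d D r i b"
  have cN: "c < M*d" unfolding c_def using iT TM b by (intro block_index_bound) auto
  have t_cinner: "t = cinner L col r" unfolding t_def bcorr_def cinner_def col_def c_def ..
  have ncol: "sqnorm {..<L} col = 1" using unit_cols cN vnorm_sq[of "{..<L}" col] unfolding col_def by simp
  txt \<open>Moving the coefficient of column c by t changes the residual to r - t col.\<close>
  define z where "z = (\<lambda>c'. xl c' + (if c' = c then t else 0))"
  have sz: "supported_on M d T z" using sT cN iT b unfolding supported_on_def z_def c_def by auto
  have rz: "(\<lambda>q. y q - mulv (M*d) D z q) = (\<lambda>q. r q - t * col q)"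
    unfolding z_def r_def col_def by (auto simp: mulv_add mulv_delta[OF cN])
  have "vnorm {..<L} r \<le> vnorm {..<L} (\<lambda>q. r q - t * col q)"
    using opt sz rz unfolding r_def by metis
  then have "sqnorm {..<L} r \<le> sqnorm {..<L} (\<lambda>q. r q - t * col q)"
    unfolding vnorm_sqnorm using sqnorm_nonneg by simp
  also have "\<dots> = sqnorm {..<L} r - 2 * Re (cnj t * t) + (cmod t)\<^sup>2"
    unfolding sqnorm_diff sqnorm_scale ncol t_cinner
    by (simp add: cinner_def Re_sum[symmetric] sum_distrib_left mult.assoc)
  also have "Re (cnj t * t) = (cmod t)\<^sup>2"
    by (simp only: cmod_power2) (simp add: power2_eq_square)
  finally show ?thesis unfolding t_def r_def by simp
qed

lemma quadratic_min_at_one: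
  fixes A B c :: real
  assumes min: "\<And>t. c - 2 * B + A \<le> c - 2 * t * B + t\<^sup>2 * A" and A0: "0 \<le> A"
  shows "A \<le> B"
proof (cases "A = 0")
  case True
  then show ?thesis using min[of 0] by simp
next
  case False
  then have Ap: "A > 0" using A0 by simp
  have "c - 2 * B + A \<le> c - 2 * (B/A) * B + (B/A)\<^sup>2 * A" by (rule min)
  then have "(A - B)\<^sup>2 \<le> 0" using Ap by (simp add: power2_eq_square field_simps)
  then show ?thesis by simp
qed

lemma lsq_error:
  assumes sT: "supported_on M d T xl" and sx: "supported_on M d T x"
    and opt: "\<forall>z. supported_on M d T z \<longrightarrow>
      vnorm {..<L} (\<lambda>q. y q - mulv (M*d) D xl q) \<le> vnorm {..<L} (\<lambda>q. y q - mulv (M*d) D z q)"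
    and obs: "\<forall>q<L. y q = mulv (M*d) D x q + w q"
  shows "vnorm {..<L} (mulv (M*d) D (\<lambda>c. xl c - x c)) \<le> vnorm {..<L} w"
proof -
  define e where "e = (\<lambda>c. xl c - x c)"
  define De where "De = mulv (M*d) D e"
  define A where "A = sqnorm {..<L} De"
  define B where "B = Re (cinner L De w)"
  txt \<open>Comparing with the competitors x + t e shows that t = 1 minimizes
    ||w||^2 - 2 t B + t^2 A.\<close>
  have key: "sqnorm {..<L} w - 2 * B + A \<le> sqnorm {..<L} w - 2 * t * B + t\<^sup>2 * A" for t :: real
  proof -
    define z where "z = (\<lambda>c. x c + complex_of_real t * e c)"
    have sz: "supported_on M d T z" using sT sx unfolding supported_on_def z_def e_def by auto
    have res: "sqnorm {..<L} (\<lambda>q. y q - mulv (M*d) D (\<lambda>c. x c + complex_of_real s * e c) q)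
        = sqnorm {..<L} w - 2 * s * B + s\<^sup>2 * A" for s :: real
    proof -
      have "sqnorm {..<L} (\<lambda>q. y q - mulv (M*d) D (\<lambda>c. x c + complex_of_real s * e c) q)
          = sqnorm {..<L} (\<lambda>q. w q - complex_of_real s * De q)"
        using obs by (intro sqnorm_cong) (simp add: De_def mulv_add mulv_scale)
      also have "\<dots> = sqnorm {..<L} w - 2 * s * B + s\<^sup>2 * A"
        unfolding sqnorm_diff A_def B_def Re_cinner sqnorm_scale
        by (simp add: sum_distrib_left mult.assoc)
      finally show ?thesis .
    qed
    have "xl = (\<lambda>c. x c + complex_of_real 1 * e c)" unfolding e_def by auto
    then have "vnorm {..<L} (\<lambda>q. y q - mulv (M*d) D (\<lambda>c. x c + complex_of_real 1 * e c) q)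
        \<le> vnorm {..<L} (\<lambda>q. y q - mulv (M*d) D z q)"
      using opt sz by metis
    then show ?thesis
      unfolding vnorm_sqnorm z_def res using sqnorm_nonneg by simp
  qed
  have AB: "A \<le> B"
    using key unfolding A_def by (rule quadratic_min_at_one) (rule sqnorm_nonneg)
  have "B \<le> vnorm {..<L} De * vnorm {..<L} w"
    unfolding B_def using complex_Re_le_cmod cinner_Cauchy_Schwarz order_trans by blast
  then have "(vnorm {..<L} De)\<^sup>2 \<le> vnorm {..<L} De * vnorm {..<L} w"
    using AB unfolding A_def vnorm_sq by simp
  then have "vnorm {..<L} De \<le> vnorm {..<L} w \<or> vnorm {..<L} De = 0"
    using vnorm_nonneg[of "{..<L}" De] by (auto simp: power2_eq_square)
  then show ?thesis using vnorm_nonneg[of "{..<L}" w] unfolding De_def e_def by auto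
qed

lemma gap_transfer:
  fixes e a r t xmin m :: real and c k :: nat
  assumes e0: "0 \<le> e" and gap: "e < (a - (2 * real k - 1) * r * t) * xmin"
    and xmin_pos: "0 < xmin" and m: "xmin \<le> m" and ck: "c \<le> k" and r0: "0 \<le> r" and t0: "0 \<le> t"
  shows "e < (a - (2 * real c - 1) * r * t) * m"
proof -
  have "0 < (a - (2 * real k - 1) * r * t) * xmin" using e0 gap by linarith
  then have pos: "0 < a - (2 * real k - 1) * r * t" using xmin_pos by (simp add: zero_less_mult_iff)
  have mono: "a - (2 * real k - 1) * r * t \<le> a - (2 * real c - 1) * r * t"
    using ck r0 t0 by (intro diff_mono order_refl mult_right_mono) auto
  have "(a - (2 * real k - 1) * r * t) * xmin \<le> (a - (2 * real c - 1) * r * t) * m"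
    using pos mono m xmin_pos by (intro mult_mono) auto
  then show ?thesis using gap by linarith
qed

lemma vnorm_block_unchanged:
  assumes "supported_on M d T u" "j \<notin> T"
  shows "vnorm {..<d} (blockvec d (\<lambda>c. x c - u c) j) = vnorm (blk d j) x"
proof -
  have "vnorm {..<d} (blockvec d (\<lambda>c. x c - u c) j) = vnorm {..<d} (blockvec d x j)"
    unfolding vnorm_def using blockvec_outside[OF assms] by (simp add: blockvec_def)
  then show ?thesis by (simp add: vnorm_blk)
qed

lemma bomp_run_step:
  assumes "bomp_run L M d D k y idx xs" "l \<in> {1..k}"
  shows "idx l < M"
    and "\<forall>i<M. vnorm {..<d} (bcorr L d D (\<lambda>q. y q - mulv (M*d) D (xs (l-1)) q) i)
        \<le> vnorm {..<d} (bcorr L d D (\<lambda>q. y q - mulv (M*d) D (xs (l-1)) q) (idx l))"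
    and "supported_on M d (idx ` {1..l}) (xs l)"
    and "\<forall>z. supported_on M d (idx ` {1..l}) z \<longrightarrow>
        vnorm {..<L} (\<lambda>q. y q - mulv (M*d) D (xs l) q) \<le> vnorm {..<L} (\<lambda>q. y q - mulv (M*d) D z q)"
  using assms unfolding bomp_run_def supported_on_def Let_def by auto

lemma bomp_chosen_blocks: "bomp_run L M d D k y idx xs \<Longrightarrow> l \<le> k \<Longrightarrow> idx ` {1..l} \<subseteq> {..<M}"
  using bomp_run_step(1) by fastforce

lemma bomp_estimate_supported:
  assumes run: "bomp_run L M d D k y idx xs" and lk: "l \<le> k"
  shows "supported_on M d (idx ` {1..l}) (xs l)"
proof (cases "l = 0")
  case True
  then show ?thesis using run unfolding bomp_run_def supported_on_def by simp
next
  case False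
  then show ?thesis using bomp_run_step(3)[OF run] lk by simp
qed

lemma bomp_residual_orthogonal:
  assumes run: "bomp_run L M d D k y idx xs" and lk: "l \<le> k" and iT: "i \<in> idx ` {1..l}"
    and unit_cols: "\<forall>c<M*d. vnorm {..<L} (\<lambda>q. D q c) = 1"
  shows "vnorm {..<d} (bcorr L d D (\<lambda>q. y q - mulv (M*d) D (xs l) q) i) = 0"
proof -
  have l: "l \<in> {1..k}" using iT lk by auto
  have "bcorr L d D (\<lambda>q. y q - mulv (M*d) D (xs l) q) i b = 0" if "b < d" for b
    using bomp_run_step(3,4)[OF run l] unit_cols iT bomp_chosen_blocks[OF run lk] that
    by (intro lsq_residual_orthogonal) auto
  then show ?thesis unfolding vnorm_def by simp
qed

context
  fixes L M d :: nat and D :: "nat \<Rightarrow> nat \<Rightarrow> complex"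
  assumes d_pos: "d \<ge> 1" and unit_cols: "\<forall>c<M*d. vnorm {..<L} (\<lambda>q. D q c) = 1"
begin

abbreviation "nu \<equiv> sub_coherence L M d D"
abbreviation "mu \<equiv> block_coherence L M d D"

lemma one_plus_nu_nonneg: "0 \<le> 1 + (real d - 1) * nu"
  using d_pos sub_coherence_nonneg[of L M d D] by simp

lemma blockop_near_isometry:
  assumes iM: "i < M"
  shows "\<bar>sqnorm {..<L} (blockop d D i a) - sqnorm {..<d} a\<bar> \<le> (real d - 1) * nu * sqnorm {..<d} a"
proof -
  define g where "g = bgram L d D i i"
  define E where "E = (\<Sum>a'<d. cnj (a a') * (\<Sum>b'\<in>{..<d}-{a'}. g a' b' * a b'))"
  have diag: "g a' a' = 1" if "a' < d" for a'
  proof -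
    have "vnorm {..<L} (\<lambda>q. D q (i*d+a')) = 1"
      using unit_cols block_index_bound[OF iM that] by auto
    then show ?thesis
      using vnorm_sq[of "{..<L}" "\<lambda>q. D q (i*d+a')"] cinner_self[of L "\<lambda>q. D q (i*d+a')"]
      unfolding g_def bgram_def cinner_def by simp
  qed
  have "complex_of_real (sqnorm {..<L} (blockop d D i a))
      = (\<Sum>a'<d. cnj (a a') * (\<Sum>b'<d. g a' b' * a b'))"
    unfolding cinner_self[symmetric] cinner_blockop by (simp add: cinner_def g_def)
  also have "\<dots> = (\<Sum>a'<d. cnj (a a') * a a' + cnj (a a') * (\<Sum>b'\<in>{..<d}-{a'}. g a' b' * a b'))"
    by (rule sum.cong[OF refl]) (simp add: sum.remove[of "{..<d}"] diag distrib_left)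
  also have "\<dots> = complex_of_real (sqnorm {..<d} a) + E"
    unfolding sum.distrib E_def cinner_self[symmetric] cinner_def ..
  finally have "E = complex_of_real (sqnorm {..<L} (blockop d D i a) - sqnorm {..<d} a)"
    by simp
  moreover have "cmod E \<le> (real d - 1) * nu * sqnorm {..<d} a"
    unfolding E_def g_def
    by (intro offdiag_quadratic_bound sub_coherence_bound sub_coherence_nonneg iM)
  ultimately show ?thesis by (simp only: norm_of_real)
qed

lemma blockop_lower:
  "i < M \<Longrightarrow> (1 - (real d - 1) * nu) * sqnorm {..<d} a \<le> sqnorm {..<L} (blockop d D i a)"
  using blockop_near_isometry[of i a] by (auto simp: algebra_simps abs_le_iff)

lemma blockop_upper:
  "i < M \<Longrightarrow> vnorm {..<L} (blockop d D i a) \<le> sqrt (1 + (real d - 1) * nu) * vnorm {..<d} a"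
  using blockop_near_isometry[of i a]
  unfolding vnorm_sqnorm real_sqrt_mult[symmetric] by (auto simp: algebra_simps abs_le_iff)

lemma cinner_blockop_noise:
  "i < M \<Longrightarrow> cmod (cinner L (blockop d D i a) w)
     \<le> sqrt (1 + (real d - 1) * nu) * vnorm {..<d} a * vnorm {..<L} w"
  using cinner_Cauchy_Schwarz[of L "blockop d D i a" w] blockop_upper[of i a] vnorm_nonneg[of "{..<L}" w]
  by (meson mult_right_mono order_trans)

lemma cinner_residual:
  assumes sup: "supported_on M d S v" and SM: "S \<subseteq> {..<M}"
    and r: "\<forall>q<L. r q = mulv (M*d) D v q + w q"
  shows "cinner L (blockop d D j a) r
     = (\<Sum>i\<in>S. cinner L (blockop d D j a) (blockop d D i (blockvec d v i))) + cinner L (blockop d D j a) w"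
proof -
  have "cinner L (blockop d D j a) r
      = cinner L (blockop d D j a) (\<lambda>q. (\<Sum>i\<in>S. blockop d D i (blockvec d v i) q) + w q)"
    by (rule cinner_cong) (simp add: r mulv_supported[OF sup SM])
  then show ?thesis by (simp add: cinner_add_right cinner_sum_right)
qed

lemma cinner_blockop_cross_sum:
  assumes SM: "S \<subseteq> {..<M}" and jM: "j < M" and jS: "j \<notin> S"
    and m: "\<And>i. i \<in> S \<Longrightarrow> vnorm {..<d} (blockvec d v i) \<le> m"
  shows "cmod (\<Sum>i\<in>S. cinner L (blockop d D j a) (blockop d D i (blockvec d v i)))
      \<le> real (card S) * real d * mu * vnorm {..<d} a * m"
proof -
  have "cmod (\<Sum>i\<in>S. cinner L (blockop d D j a) (blockop d D i (blockvec d v i)))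
      \<le> (\<Sum>i\<in>S. cmod (cinner L (blockop d D j a) (blockop d D i (blockvec d v i))))"
    by (rule norm_sum)
  also have "\<dots> \<le> (\<Sum>i\<in>S. real d * mu * vnorm {..<d} a * m)"
  proof (rule sum_mono)
    fix i assume i: "i \<in> S"
    have "cmod (cinner L (blockop d D j a) (blockop d D i (blockvec d v i)))
        \<le> real d * mu * vnorm {..<d} a * vnorm {..<d} (blockvec d v i)"
      using i SM jM jS d_pos by (intro cinner_blockop_cross) auto
    also have "\<dots> \<le> real d * mu * vnorm {..<d} a * m"
      using m[OF i] by (intro mult_left_mono) (auto simp: block_coherence_nonneg vnorm_nonneg)
    finally show "cmod (cinner L (blockop d D j a) (blockop d D i (blockvec d v i)))
        \<le> real d * mu * vnorm {..<d} a * m" .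
  qed
  finally show ?thesis by simp
qed

lemma bcorr_outside_support:
  assumes sup: "supported_on M d S v" and SM: "S \<subseteq> {..<M}"
    and r: "\<forall>q<L. r q = mulv (M*d) D v q + w q"
    and jM: "j < M" and jS: "j \<notin> S"
    and m: "\<And>i. i \<in> S \<Longrightarrow> vnorm {..<d} (blockvec d v i) \<le> m" and m0: "m \<ge> 0"
  shows "vnorm {..<d} (bcorr L d D r j)
     \<le> real (card S) * real d * mu * m + sqrt (1 + (real d - 1) * nu) * vnorm {..<L} w"
proof -
  define c where "c = bcorr L d D r j"
  define K where "K = real (card S) * real d * mu * m + sqrt (1 + (real d - 1) * nu) * vnorm {..<L} w"
  have "(vnorm {..<d} c)\<^sup>2 = cmod (cinner d c c)"
    by (simp add: cinner_self vnorm_sq sqnorm_nonneg)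
  also have "\<dots> = cmod (cinner L (blockop d D j c) r)"
    unfolding c_def cinner_bcorr ..
  also have "\<dots> \<le> cmod (\<Sum>i\<in>S. cinner L (blockop d D j c) (blockop d D i (blockvec d v i)))
      + cmod (cinner L (blockop d D j c) w)"
    by (subst cinner_residual[OF sup SM r]) (rule norm_triangle_ineq)
  also have "\<dots> \<le> real (card S) * real d * mu * vnorm {..<d} c * m
      + sqrt (1 + (real d - 1) * nu) * vnorm {..<d} c * vnorm {..<L} w"
    by (intro add_mono cinner_blockop_cross_sum cinner_blockop_noise SM jM jS m) auto
  also have "\<dots> = vnorm {..<d} c * K" unfolding K_def by (simp add: algebra_simps)
  finally have "(vnorm {..<d} c)\<^sup>2 \<le> vnorm {..<d} c * K" .
  moreover have "K \<ge> 0" unfolding K_def using m0 one_plus_nu_nonneg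
    by (intro add_nonneg_nonneg mult_nonneg_nonneg) (auto simp: block_coherence_nonneg vnorm_nonneg)
  ultimately show ?thesis
    using vnorm_nonneg[of "{..<d}" c] unfolding c_def[symmetric] K_def[symmetric]
    by (cases "vnorm {..<d} c = 0") (auto simp: power2_eq_square)
qed

lemma bcorr_strongest_block:
  assumes sup: "supported_on M d S v" and SM: "S \<subseteq> {..<M}" and fin: "finite S"
    and r: "\<forall>q<L. r q = mulv (M*d) D v q + w q"
    and iS: "i \<in> S"
    and m: "\<And>j. j \<in> S \<Longrightarrow> vnorm {..<d} (blockvec d v j) \<le> vnorm {..<d} (blockvec d v i)"
  shows "(1 - (real d - 1) * nu - (real (card S) - 1) * real d * mu) * vnorm {..<d} (blockvec d v i)
     - sqrt (1 + (real d - 1) * nu) * vnorm {..<L} w \<le> vnorm {..<d} (bcorr L d D r i)"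
proof -
  define a where "a = blockvec d v i"
  define mm where "mm = vnorm {..<d} a"
  define c where "c = bcorr L d D r i"
  define cross where "cross = (\<Sum>j\<in>S-{i}. cinner L (blockop d D i a) (blockop d D j (blockvec d v j)))"
  have iM: "i < M" using iS SM by auto
  have up: "cmod (cinner L (blockop d D i a) r) \<le> mm * vnorm {..<d} c"
    unfolding mm_def c_def cinner_bcorr[symmetric] by (rule cinner_Cauchy_Schwarz)
  have eq: "cinner L (blockop d D i a) r
      = cinner L (blockop d D i a) (blockop d D i a) + cross + cinner L (blockop d D i a) w"
    unfolding cross_def using fin iS
    by (subst cinner_residual[OF sup SM r], subst sum.remove[of S i]) (auto simp: a_def)
  have cardS: "real (card (S-{i})) = real (card S) - 1"
  proof -
    have "0 < card S" using fin iS card_gt_0_iff by blast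
    then show ?thesis using fin iS by (simp add: of_nat_diff)
  qed
  have c1: "cmod cross \<le> (real (card S) - 1) * real d * mu * mm * mm"
    unfolding cross_def mm_def cardS[symmetric] using SM iM m by (intro cinner_blockop_cross_sum) (auto simp: a_def)
  have c2: "cmod (cinner L (blockop d D i a) w) \<le> sqrt (1 + (real d - 1) * nu) * mm * vnorm {..<L} w"
    unfolding mm_def by (rule cinner_blockop_noise[OF iM])
  have c3: "(1 - (real d - 1) * nu) * mm * mm \<le> Re (cinner L (blockop d D i a) (blockop d D i a))"
    using blockop_lower[OF iM, of a] unfolding mm_def
    by (simp add: cinner_self vnorm_sq[symmetric] power2_eq_square)
  have "mm * ((1 - (real d - 1) * nu - (real (card S) - 1) * real d * mu) * mm
      - sqrt (1 + (real d - 1) * nu) * vnorm {..<L} w) \<le> mm * vnorm {..<d} c"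
    using up c1 c2 c3 eq complex_Re_le_cmod[of "cinner L (blockop d D i a) r"]
      abs_Re_le_cmod[of cross] abs_Re_le_cmod[of "cinner L (blockop d D i a) w"]
    by (simp add: algebra_simps)
  moreover have "0 \<le> sqrt (1 + (real d - 1) * nu) * vnorm {..<L} w"
    using one_plus_nu_nonneg vnorm_nonneg by simp
  ultimately show ?thesis
    using vnorm_nonneg[of "{..<d}" a] vnorm_nonneg[of "{..<d}" c]
    unfolding c_def[symmetric] mm_def[symmetric] a_def[symmetric]
    by (cases "mm = 0") (auto simp: mult_le_cancel_left)
qed

lemma mulv_restricted_lower:
  assumes sup: "supported_on M d I e" and IM: "I \<subseteq> {..<M}"
  shows "(1 - (real d - 1) * nu - (real (card I) - 1) * real d * mu) * sqnorm {..<M*d} e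
     \<le> sqnorm {..<L} (mulv (M*d) D e)"
proof -
  have fin: "finite I" using IM finite_subset by blast
  define B where "B = (\<lambda>i. blockop d D i (blockvec d e i))"
  define s where "s = (\<lambda>i. vnorm {..<d} (blockvec d e i))"
  define T where "T = (\<Sum>i\<in>I. s i)"
  have "complex_of_real (sqnorm {..<L} (mulv (M*d) D e))
      = cinner L (\<lambda>q. \<Sum>i\<in>I. B i q) (\<lambda>q. \<Sum>j\<in>I. B j q)"
    unfolding cinner_self[symmetric] B_def mulv_supported[OF sup IM] ..
  then have eq: "sqnorm {..<L} (mulv (M*d) D e) = (\<Sum>i\<in>I. Re (\<Sum>j\<in>I. cinner L (B i) (B j)))"
    unfolding cinner_sum_left cinner_sum_right by (metis Re_complex_of_real Re_sum)
  have row: "(1 - (real d - 1) * nu) * (s i)\<^sup>2 - real d * mu * s i * (T - s i)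
      \<le> Re (\<Sum>j\<in>I. cinner L (B i) (B j))" if i: "i \<in> I" for i
  proof -
    have iM: "i < M" using i IM by auto
    have split: "(\<Sum>j\<in>I. cinner L (B i) (B j)) = cinner L (B i) (B i) + (\<Sum>j\<in>I-{i}. cinner L (B i) (B j))"
      using fin i by (subst sum.remove[of I i]) auto
    have diag: "(1 - (real d - 1) * nu) * (s i)\<^sup>2 \<le> Re (cinner L (B i) (B i))"
      unfolding cinner_self B_def s_def vnorm_sq using blockop_lower[OF iM] by simp
    have "cmod (\<Sum>j\<in>I-{i}. cinner L (B i) (B j)) \<le> (\<Sum>j\<in>I-{i}. cmod (cinner L (B i) (B j)))"
      by (rule norm_sum)
    also have "\<dots> \<le> (\<Sum>j\<in>I-{i}. real d * mu * s i * s j)"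
      unfolding B_def s_def using IM iM d_pos by (intro sum_mono cinner_blockop_cross) auto
    also have "\<dots> = real d * mu * s i * (T - s i)"
      unfolding T_def using fin i by (simp add: sum_distrib_left sum.remove[of I i] algebra_simps)
    finally show ?thesis
      unfolding split using diag abs_Re_le_cmod[of "\<Sum>j\<in>I-{i}. cinner L (B i) (B j)"] by simp
  qed
  have "(1 - (real d - 1) * nu - (real (card I) - 1) * real d * mu) * sqnorm {..<M*d} e
      = (1 - (real d - 1) * nu - (real (card I) - 1) * (real d * mu)) * (\<Sum>i\<in>I. (s i)\<^sup>2)"
    unfolding s_def vnorm_sq sqnorm_supported[OF sup IM] by (simp add: mult.assoc)
  also have "\<dots> \<le> (\<Sum>i\<in>I. (1 - (real d - 1) * nu) * (s i)\<^sup>2 - real d * mu * s i * (T - s i))"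
    unfolding T_def using fin block_coherence_nonneg[of L M d D] by (intro row_dominant_sum_lower) auto
  also have "\<dots> \<le> sqnorm {..<L} (mulv (M*d) D e)"
    unfolding eq by (rule sum_mono) (rule row)
  finally show ?thesis .
qed

lemma support_block_dominates:
  assumes sup: "supported_on M d S v" and SM: "S \<subseteq> {..<M}" and fin: "finite S"
    and r: "\<forall>q<L. r q = mulv (M*d) D v q + w q"
    and iS: "i \<in> S"
    and imax: "\<And>j. j \<in> S \<Longrightarrow> vnorm {..<d} (blockvec d v j) \<le> vnorm {..<d} (blockvec d v i)"
    and gap: "2 * sqrt (1 + (real d - 1) * nu) * vnorm {..<L} w
      < (1 - (real d - 1) * nu - (2 * real (card S) - 1) * real d * mu) * vnorm {..<d} (blockvec d v i)"
  shows "0 < vnorm {..<d} (bcorr L d D r i)"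
    and "\<And>j. j < M \<Longrightarrow> j \<notin> S \<Longrightarrow> vnorm {..<d} (bcorr L d D r j) < vnorm {..<d} (bcorr L d D r i)"
proof -
  define m where "m = vnorm {..<d} (blockvec d v i)"
  define noise where "noise = sqrt (1 + (real d - 1) * nu) * vnorm {..<L} w"
  define upper where "upper = real (card S) * real d * mu * m + noise"
  have lower: "(1 - (real d - 1) * nu - (real (card S) - 1) * real d * mu) * m - noise
      \<le> vnorm {..<d} (bcorr L d D r i)"
    unfolding m_def noise_def by (rule bcorr_strongest_block[OF sup SM fin r iS imax])
  have "upper < (1 - (real d - 1) * nu - (real (card S) - 1) * real d * mu) * m - noise"
    using gap unfolding upper_def noise_def m_def[symmetric] by (simp add: algebra_simps)
  then have above: "upper < vnorm {..<d} (bcorr L d D r i)"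
    using lower by linarith
  have "0 \<le> upper"
    unfolding upper_def noise_def m_def using one_plus_nu_nonneg
    by (intro add_nonneg_nonneg mult_nonneg_nonneg) (auto simp: block_coherence_nonneg vnorm_nonneg)
  then show "0 < vnorm {..<d} (bcorr L d D r i)" using above by linarith
  fix j assume "j < M" "j \<notin> S"
  then have "vnorm {..<d} (bcorr L d D r j) \<le> upper"
    unfolding upper_def noise_def m_def using imax
    by (intro bcorr_outside_support[OF sup SM r]) (auto simp: vnorm_nonneg)
  then show "vnorm {..<d} (bcorr L d D r j) < vnorm {..<d} (bcorr L d D r i)"
    using above by linarith
qed

lemma bomp_step_selects_support:
  assumes run: "bomp_run L M d D k y idx xs" and lk: "Suc l \<le> k"
    and xsup: "supported_on M d S x" and SM: "S \<subseteq> {..<M}" and cardS: "card S \<le> k"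
    and obs: "\<forall>q<L. y q = mulv (M*d) D x q + w q"
    and xmin: "\<forall>i\<in>S. xmin \<le> vnorm (blk d i) x" and xmin_pos: "0 < xmin"
    and gap: "2 * sqrt (1 + (real d - 1) * nu) * vnorm {..<L} w
      < (1 - (real d - 1) * nu - (2 * real k - 1) * real d * mu) * xmin"
    and TS: "idx ` {1..l} \<subseteq> S" and missing: "\<not> S \<subseteq> idx ` {1..l}"
  shows "idx (Suc l) \<in> S - idx ` {1..l}"
proof -
  define T where "T = idx ` {1..l}"
  define r where "r = (\<lambda>q. y q - mulv (M*d) D (xs l) q)"
  define v where "v = (\<lambda>c. x c - xs l c)"
  define f where "f = (\<lambda>i. vnorm {..<d} (blockvec d v i))"
  have finS: "finite S" using SM finite_subset by blast
  have xs_sup: "supported_on M d T (xs l)" unfolding T_def using run lk by (intro bomp_estimate_supported) auto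
  have vsup: "supported_on M d S v"
    using xsup supported_on_mono[OF xs_sup TS[folded T_def]] unfolding supported_on_def v_def by auto
  have rv: "\<forall>q<L. r q = mulv (M*d) D v q + w q"
    unfolding r_def v_def using obs by (simp add: mulv_diff)
  txt \<open>A block of S not yet chosen is untouched by x^l, so v has a block of norm >= xmin.\<close>
  obtain j0 where j0: "j0 \<in> S" "j0 \<notin> T" using missing unfolding T_def by auto
  have "Max (f ` S) \<in> f ` S" using finS j0(1) by (intro Max_in) auto
  then obtain istar where istar: "istar \<in> S" "f istar = Max (f ` S)" by (metis imageE)
  have fmax: "f j \<le> f istar" if "j \<in> S" for j
    unfolding istar(2) using finS that by simp
  have "xmin \<le> f istar"
    using xmin j0(1) fmax[OF j0(1)] vnorm_block_unchanged[OF xs_sup j0(2)] unfolding f_def v_def by force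
  then have "2 * sqrt (1 + (real d - 1) * nu) * vnorm {..<L} w
      < (1 - (real d - 1) * nu - (2 * real (card S) - 1) * real d * mu) * f istar"
    using one_plus_nu_nonneg vnorm_nonneg[of "{..<L}" w] block_coherence_nonneg[of L M d D]
    by (intro gap_transfer[OF _ gap xmin_pos _ cardS]) auto
  then have dom: "0 < vnorm {..<d} (bcorr L d D r istar)"
    "\<And>j. j < M \<Longrightarrow> j \<notin> S \<Longrightarrow> vnorm {..<d} (bcorr L d D r j) < vnorm {..<d} (bcorr L d D r istar)"
    using support_block_dominates[OF vsup SM finS rv istar(1)] fmax unfolding f_def by auto
  have step: "Suc l \<in> {1..k}" using lk by auto
  have greedy: "vnorm {..<d} (bcorr L d D r istar) \<le> vnorm {..<d} (bcorr L d D r (idx (Suc l)))"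
    using bomp_run_step(2)[OF run step] istar(1) SM unfolding r_def by auto
  have "idx (Suc l) \<in> S"
    using dom(2)[of "idx (Suc l)"] greedy bomp_run_step(1)[OF run step] by fastforce
  moreover have "idx (Suc l) \<notin> T"
    using bomp_residual_orthogonal[OF run _ _ unit_cols, of l "idx (Suc l)"] lk dom(1) greedy
    unfolding T_def r_def by fastforce
  ultimately show ?thesis unfolding T_def by blast
qed

lemma bomp_support_invariant:
  assumes run: "bomp_run L M d D k y idx xs"
    and xsup: "supported_on M d S x" and SM: "S \<subseteq> {..<M}" and cardS: "card S \<le> k"
    and obs: "\<forall>q<L. y q = mulv (M*d) D x q + w q"
    and xmin: "\<forall>i\<in>S. xmin \<le> vnorm (blk d i) x" and xmin_pos: "0 < xmin"
    and gap: "2 * sqrt (1 + (real d - 1) * nu) * vnorm {..<L} w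
      < (1 - (real d - 1) * nu - (2 * real k - 1) * real d * mu) * xmin"
  shows "l \<le> k \<Longrightarrow> S \<subseteq> idx ` {1..l} \<or> (idx ` {1..l} \<subseteq> S \<and> card (idx ` {1..l}) = l)"
proof (induction l)
  case 0
  then show ?case by simp
next
  case (Suc l)
  have T_Suc: "idx ` {1..Suc l} = insert (idx (Suc l)) (idx ` {1..l})"
    by (simp add: atLeastAtMostSuc_conv)
  show ?case
  proof (cases "S \<subseteq> idx ` {1..l}")
    case True
    then show ?thesis unfolding T_Suc by blast
  next
    case False
    then have TS: "idx ` {1..l} \<subseteq> S" and card: "card (idx ` {1..l}) = l"
      using Suc by auto
    have "idx (Suc l) \<in> S - idx ` {1..l}"
      by (rule bomp_step_selects_support[OF run Suc.prems xsup SM cardS obs xmin xmin_pos gap TS False])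
    then show ?thesis unfolding T_Suc using TS card by (simp add: card_insert_disjoint)
  qed
qed

lemma bomp_recovers_support:
  assumes run: "bomp_run L M d D k y idx xs"
    and xsup: "supported_on M d S x" and SM: "S \<subseteq> {..<M}" and cardS: "card S \<le> k"
    and obs: "\<forall>q<L. y q = mulv (M*d) D x q + w q"
    and xmin: "\<forall>i\<in>S. xmin \<le> vnorm (blk d i) x" and xmin_pos: "0 < xmin"
    and gap: "2 * sqrt (1 + (real d - 1) * nu) * vnorm {..<L} w
      < (1 - (real d - 1) * nu - (2 * real k - 1) * real d * mu) * xmin"
  shows "S \<subseteq> idx ` {1..k}"
proof -
  have finS: "finite S" using SM finite_subset by blast
  have "S \<subseteq> idx ` {1..k} \<or> (idx ` {1..k} \<subseteq> S \<and> card (idx ` {1..k}) = k)"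
    by (rule bomp_support_invariant[OF run xsup SM cardS obs xmin xmin_pos gap]) (rule order_refl)
  then show ?thesis
  proof
    assume chosen: "idx ` {1..k} \<subseteq> S \<and> card (idx ` {1..k}) = k"
    then have "card (idx ` {1..k}) = card S"
      using cardS card_mono[OF finS, of "idx ` {1..k}"] by linarith
    then show ?thesis using card_subset_eq[OF finS] chosen by blast
  qed
qed

lemma bomp_error_bound:
  assumes run: "bomp_run L M d D k y idx xs" and k1: "1 \<le> k"
    and xsup: "supported_on M d S x" and found: "S \<subseteq> idx ` {1..k}"
    and obs: "\<forall>q<L. y q = mulv (M*d) D x q + w q"
  shows "(1 - (real d - 1) * nu - (real k - 1) * real d * mu) * sqnorm {..<M*d} (\<lambda>c. xs k c - x c)
     \<le> (vnorm {..<L} w)\<^sup>2"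
proof -
  define T where "T = idx ` {1..k}"
  define e where "e = (\<lambda>c. xs k c - x c)"
  have kk: "k \<in> {1..k}" using k1 by auto
  have xT: "supported_on M d T x" using supported_on_mono[OF xsup found] unfolding T_def .
  have eT: "supported_on M d T e"
    using bomp_run_step(3)[OF run kk] xT unfolding supported_on_def e_def T_def by auto
  have TM: "T \<subseteq> {..<M}" unfolding T_def by (rule bomp_chosen_blocks[OF run order_refl])
  have cardT: "card T \<le> k" unfolding T_def using card_image_le[of "{1..k}" idx] by simp
  have "(1 - (real d - 1) * nu - (real k - 1) * real d * mu) * sqnorm {..<M*d} e
      \<le> (1 - (real d - 1) * nu - (real (card T) - 1) * real d * mu) * sqnorm {..<M*d} e"
    using cardT block_coherence_nonneg[of L M d D] sqnorm_nonneg[of "{..<M*d}" e]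
    by (intro mult_right_mono) (auto simp: mult_right_mono)
  also have "\<dots> \<le> sqnorm {..<L} (mulv (M*d) D e)"
    by (rule mulv_restricted_lower[OF eT TM])
  also have "\<dots> \<le> (vnorm {..<L} w)\<^sup>2"
    using lsq_error[OF bomp_run_step(3)[OF run kk] xT[unfolded T_def] bomp_run_step(4)[OF run kk] obs]
      vnorm_nonneg
    unfolding vnorm_sq[symmetric] e_def by (simp add: power_mono)
  finally show ?thesis unfolding e_def .
qed

end

lemma bsupp_supported:
  assumes d_pos: "d \<ge> 1" and x_dim: "\<forall>c \<ge> M * d. x c = 0"
  shows "supported_on M d (bsupp M d x) x"
  unfolding supported_on_def
proof (intro allI impI)
  fix c assume c: "M * d \<le> c \<or> c div d \<notin> bsupp M d x"
  show "x c = 0"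
  proof (cases "M * d \<le> c")
    case True
    then show ?thesis using x_dim by auto
  next
    case False
    have "c = c div d * d + c mod d" "c mod d < d" "(c div d + 1) * d = c div d * d + d"
      using d_pos by simp_all
    then have "c div d * d \<le> c" "c < (c div d + 1) * d" by linarith+
    moreover have "c div d < M" using False d_pos by (simp add: div_less_iff_less_mult)
    ultimately show ?thesis using c False unfolding bsupp_def blk_def by auto
  qed
qed

lemma bsupp_block_pos:
  assumes "i \<in> bsupp M d x"
  shows "0 < vnorm (blk d i) x"
proof -
  obtain c where c: "c \<in> blk d i" "x c \<noteq> 0" using assms unfolding bsupp_def by auto
  have "0 < (cmod (x c))\<^sup>2" using c(2) by simp
  also have "\<dots> \<le> sqnorm (blk d i) x"
    unfolding sqnorm_def using c(1) by (intro member_le_sum) (auto simp: blk_def)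
  finally show ?thesis unfolding vnorm_sqnorm by simp
qed

theorem theorem2:
  fixes L M d k :: nat
    and D :: "nat \<Rightarrow> nat \<Rightarrow> complex"
    and x w y :: "nat \<Rightarrow> complex"
    and \<epsilon> :: real
    and idx :: "nat \<Rightarrow> nat"
    and xs :: "nat \<Rightarrow> nat \<Rightarrow> complex"
  assumes d_pos: "d \<ge> 1"
    and L_lt_N: "L < M * d"
    and unit_cols: "\<forall>c < M * d. vnorm {..<L} (\<lambda>q. D q c) = 1"
    and full_rank: "\<forall>I. I \<subseteq> {..<M} \<and> card I \<le> k \<longrightarrow>
        (\<forall>c. (\<forall>j. j \<notin> (\<Union>i\<in>I. blk d i) \<longrightarrow> c j = 0) \<longrightarrow>
             (\<forall>q<L. (\<Sum>j < M * d. D q j * c j) = 0) \<longrightarrow> (\<forall>j. c j = 0))"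
    and x_dim: "\<forall>c \<ge> M * d. x c = 0"
    and x_sparse: "card (bsupp M d x) \<le> k"
    and x_nz: "x \<noteq> (\<lambda>_. 0)"
    and obs: "\<forall>q<L. y q = mulv (M * d) D x q + w q"
    and eps_pos: "\<epsilon> > 0"
    and noise: "vnorm {..<L} w \<le> \<epsilon>"
    and cond: "(1 - (real d - 1) * sub_coherence L M d D) * Min ((\<lambda>i. vnorm (blk d i) x) ` bsupp M d x)
       > 2 * \<epsilon> * sqrt (1 + (real d - 1) * sub_coherence L M d D)
         + (2 * real k - 1) * real d * block_coherence L M d D * Min ((\<lambda>i. vnorm (blk d i) x) ` bsupp M d x)"
    and run: "bomp_run L M d D k y idx xs"
  shows "bsupp M d x \<subseteq> idx ` {1..k}
    \<and> (vnorm {..<M * d} (\<lambda>c. xs k c - x c))\<^sup>2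
        \<le> \<epsilon>\<^sup>2 / (1 - (real d - 1) * sub_coherence L M d D - (real k - 1) * real d * block_coherence L M d D)"
proof -
  define S where "S = bsupp M d x"
  define xmin where "xmin = Min ((\<lambda>i. vnorm (blk d i) x) ` S)"
  define \<gamma> where "\<gamma> = 1 - (real d - 1) * nu L M d D - (2 * real k - 1) * real d * mu L M d D"
  define lam where "lam = 1 - (real d - 1) * nu L M d D - (real k - 1) * real d * mu L M d D"
  have SM: "S \<subseteq> {..<M}" and finS: "finite S" unfolding S_def bsupp_def by auto
  have xsup: "supported_on M d S x" unfolding S_def by (rule bsupp_supported[OF d_pos x_dim])
  have Sne: "S \<noteq> {}" using x_nz xsup unfolding supported_on_def by auto
  have xmin: "\<forall>i\<in>S. xmin \<le> vnorm (blk d i) x" and xmin_pos: "0 < xmin"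
    unfolding xmin_def using finS Sne bsupp_block_pos by (auto simp: S_def)
  have "0 \<le> 2 * sqrt (1 + (real d - 1) * nu L M d D) * vnorm {..<L} w \<and>
      2 * sqrt (1 + (real d - 1) * nu L M d D) * vnorm {..<L} w \<le> 2 * sqrt (1 + (real d - 1) * nu L M d D) * \<epsilon>"
    using noise vnorm_nonneg[of "{..<L}" w] one_plus_nu_nonneg[OF d_pos unit_cols] by (simp add: mult_left_mono)
  then have gap: "2 * sqrt (1 + (real d - 1) * nu L M d D) * vnorm {..<L} w < \<gamma> * xmin" and "0 < \<gamma> * xmin"
    using cond unfolding \<gamma>_def xmin_def S_def by (simp_all add: algebra_simps)
  then have "0 < \<gamma>" using xmin_pos by (simp add: zero_less_mult_iff)
  moreover have "\<gamma> \<le> lam" unfolding \<gamma>_def lam_def using block_coherence_nonneg[of L M d D]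
    by (intro diff_mono order_refl mult_right_mono) auto
  ultimately have "0 < lam" by linarith
  have found: "S \<subseteq> idx ` {1..k}" unfolding \<gamma>_def
    by (rule bomp_recovers_support[OF d_pos unit_cols run xsup SM x_sparse[folded S_def] obs xmin xmin_pos gap[unfolded \<gamma>_def]])
  then have "1 \<le> k" using Sne by (cases k) auto
  then have "lam * sqnorm {..<M * d} (\<lambda>c. xs k c - x c) \<le> (vnorm {..<L} w)\<^sup>2"
    unfolding lam_def by (rule bomp_error_bound[OF d_pos unit_cols run _ xsup found obs])
  also have "\<dots> \<le> \<epsilon>\<^sup>2" using noise vnorm_nonneg by (intro power_mono) auto
  finally have "(vnorm {..<M * d} (\<lambda>c. xs k c - x c))\<^sup>2 \<le> \<epsilon>\<^sup>2 / lam"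
    using \<open>0 < lam\<close> unfolding vnorm_sq by (simp add: field_simps)
  then show ?thesis using found unfolding S_def lam_def by simp
qed

end
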